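(* Let $N=\{1,\dots,n\}$ be a set of $n\ge 1$ agents and $M$ a set of $m$ indivisible goods. Write $m = kn + r$ with $k=\lfloor m/n\rfloor$ and $0\le r<n$. Suppose every agent $i$ has an additive leveled valuation $V_i:2^M\to\mathbb{R}_{\ge 0}$. Fix an arbitrary picking order $\sigma=(\sigma_1,\dots,\sigma_n)$ of the agents and run the following sequential procedure: for $t=1,\dots,n-r$, agent $\sigma_t$ receives a bundle of exactly $k$ still-unallocated goods that maximizes $V_{\sigma_t}$ among all such bundles; then for $t=n-r+1,\dots,n$, agent $\sigma_t$ receives a bundle of exactly $k+1$ still-unallocated goods that maximizes $V_{\sigma_t}$ among all such bundles (ties broken arbitrarily). Then the resulting allocation $B=(B_1,\dots,B_n)$ satisfies $V_i(B_i)\ge \frac{k}{k+1}\,\mu_i$ for every agent $i\in N$, i.e., it is $\frac{\lfloor m/n\rfloor}{\lfloor m/n\rfloor+1}$-MMS. In particular, a $\frac{\lfloor m/n\rfloor}{\lfloor m/n\rfloor+1}$-MMS allocation always exists under additive leveled valuations.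
   Context: A valuation $V:2^M\to\mathbb{R}_{\ge 0}$ is additive if $V(S)=\sum_{g\in S}V(\{g\})$ for all $S\subseteq M$. It is leveled if for any bundles $S,T\subseteq M$ with $|S|>|T|$ we have $V(S)>V(T)$. It is additive leveled if it is both. An allocation is a partition $B=(B_1,\dots,B_n)$ of $M$ into $n$ pairwise disjoint bundles (possibly empty) with $\bigcup_i B_i=M$, where $B_i$ is given to agent $i$; $\Pi_n(M)$ denotes the set of all such partitions. The maximin share of agent $i$ is $\mu_i=\max_{B'\in\Pi_n(M)}\min_{j\in N}V_i(B'_j)$. For $\alpha\in[0,1]$, an allocation $B$ is $\alpha$-MMS if $V_i(B_i)\ge \alpha\,\mu_i$ for all $i\in N$. *)

theory Defs
  imports Complex_Main
begin

text \<open>Agents are indexed by 0,...,n-1 (the paper's 1..n); goods form a finite set M.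
  A valuation is a function on bundles; only its values on subsets of M matter.\<close>

definition nonneg_valuation :: "'g set \<Rightarrow> ('g set \<Rightarrow> real) \<Rightarrow> bool" where
  "nonneg_valuation M V \<longleftrightarrow> (\<forall>S. S \<subseteq> M \<longrightarrow> V S \<ge> 0)"

definition additive :: "'g set \<Rightarrow> ('g set \<Rightarrow> real) \<Rightarrow> bool" where
  "additive M V \<longleftrightarrow> (\<forall>S. S \<subseteq> M \<longrightarrow> V S = (\<Sum>g\<in>S. V {g}))"

definition leveled :: "'g set \<Rightarrow> ('g set \<Rightarrow> real) \<Rightarrow> bool" where
  "leveled M V \<longleftrightarrow> (\<forall>S T. S \<subseteq> M \<longrightarrow> T \<subseteq> M \<longrightarrow> card S > card T \<longrightarrow> V S > V T)"

definition additive_leveled :: "'g set \<Rightarrow> ('g set \<Rightarrow> real) \<Rightarrow> bool" where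
  "additive_leveled M V \<longleftrightarrow> nonneg_valuation M V \<and> additive M V \<and> leveled M V"

definition is_allocation :: "nat \<Rightarrow> 'g set \<Rightarrow> (nat \<Rightarrow> 'g set) \<Rightarrow> bool" where
  "is_allocation n M B \<longleftrightarrow>
     (\<forall>i<n. B i \<subseteq> M) \<and>
     (\<forall>i<n. \<forall>j<n. i \<noteq> j \<longrightarrow> B i \<inter> B j = {}) \<and>
     (\<Union>i<n. B i) = M"

definition mms :: "nat \<Rightarrow> 'g set \<Rightarrow> ('g set \<Rightarrow> real) \<Rightarrow> real" where
  "mms n M V = Max {Min ((\<lambda>j. V (B j)) ` {..<n}) | B. is_allocation n M B}"

definition alpha_MMS ::
  "real \<Rightarrow> nat \<Rightarrow> 'g set \<Rightarrow> (nat \<Rightarrow> 'g set \<Rightarrow> real) \<Rightarrow> (nat \<Rightarrow> 'g set) \<Rightarrow> bool" where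
  "alpha_MMS \<alpha> n M V B \<longleftrightarrow>
     is_allocation n M B \<and> (\<forall>i<n. V i (B i) \<ge> \<alpha> * mms n M (V i))"

text \<open>A possible outcome (any tie-breaking) of the sequential procedure with picking
  order \<sigma> (a permutation of 0..n-1): at step t (0-based), agent \<sigma> t picks a
  V-maximal bundle of size k (if t < n - r) or k+1 (otherwise) among the goods not yet
  allocated, where k = m div n, r = m mod n.\<close>
definition procedure_outcome ::
  "nat \<Rightarrow> 'g set \<Rightarrow> (nat \<Rightarrow> 'g set \<Rightarrow> real) \<Rightarrow> (nat \<Rightarrow> nat) \<Rightarrow> (nat \<Rightarrow> 'g set) \<Rightarrow> bool" where
  "procedure_outcome n M V \<sigma> B \<longleftrightarrow>
     (\<forall>t<n.
        let k = card M div n; r = card M mod n;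
            s = (if t < n - r then k else k + 1);
            R = M - (\<Union>u<t. B (\<sigma> u))
        in B (\<sigma> t) \<subseteq> R \<and> card (B (\<sigma> t)) = s \<and>
           (\<forall>T. T \<subseteq> R \<longrightarrow> card T = s \<longrightarrow> V (\<sigma> t) T \<le> V (\<sigma> t) (B (\<sigma> t))))"

end

theory Submission imports Defs begin

text \<open>Let \<open>k = m div n\<close> and let \<open>\<mu>\<close> be an agent's maximin share. Every allocation has a
  bundle of at most \<open>k\<close> goods, so by levelness every \<open>(k+1)\<close>-set is worth more than \<open>\<mu>\<close>;
  this settles the agents picking \<open>k+1\<close> goods. An agent picking \<open>k\<close> goods from at least
  \<open>k+1\<close> remaining ones can take a \<open>(k+1)\<close>-set minus its cheapest good, worth at least
  \<open>k/(k+1)\<close> of it. The only agent facing exactly \<open>k\<close> remaining goods is the last one when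
  \<open>n\<close> divides \<open>m\<close>; there the maximin bundle containing the globally cheapest good \<open>g\<close>
  either has \<open>k\<close> goods, and is worth at most \<open>V {g} + V W \<le> (1 + 1/k) V W\<close>, or is too
  large, forcing another bundle of fewer than \<open>k\<close> goods.\<close>

section \<open>Allocations\<close>

lemma finite_ne_ex_min:
  fixes f :: "'a \<Rightarrow> 'b::linorder"
  assumes "finite S" "S \<noteq> {}"
  shows "\<exists>x\<in>S. \<forall>y\<in>S. f x \<le> f y"
  using ex_is_arg_min_if_finite[OF assms, of f] unfolding is_arg_min_def by (auto simp: not_less)

lemma allocation_card_sum:
  assumes "finite M" "is_allocation n M B"
  shows "(\<Sum>j<n. card (B j)) = card M"
proof -
  have "card (\<Union>j<n. B j) = (\<Sum>j<n. card (B j))"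
    using assms unfolding is_allocation_def by (intro card_UN_disjoint) (auto intro: finite_subset)
  then show ?thesis using assms(2) unfolding is_allocation_def by simp
qed

lemma allocation_ex_card_less:
  assumes "finite M" "is_allocation n M B" "card M < n * c"
  shows "\<exists>j<n. card (B j) < c"
proof (rule ccontr)
  assume "\<not> ?thesis"
  then have "\<forall>j<n. c \<le> card (B j)" by (meson not_le)
  then have "n * c \<le> (\<Sum>j<n. card (B j))"
    using sum_bounded_below[of "{..<n}" c "\<lambda>j. card (B j)"] by simp
  then show False using assms allocation_card_sum by fastforce
qed

lemma allocation_ex_card_less_of_large:
  assumes "finite M" "is_allocation n M B" "card M \<le> n * c" "i < n" "c < card (B i)"
  shows "\<exists>j<n. card (B j) < c"
proof (rule ccontr)
  assume "\<not> ?thesis"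
  then have "\<forall>j<n. c \<le> card (B j)" by (meson not_le)
  then have "(\<Sum>j<n. c) < (\<Sum>j<n. card (B j))"
    using assms(4,5) by (intro sum_strict_mono_ex1) auto
  then show False using assms(1-3) allocation_card_sum by fastforce
qed

lemma is_allocation_reindex:
  assumes "bij_betw \<sigma> {..<n} {..<n}" "is_allocation n M (\<lambda>t. B (\<sigma> t))"
  shows "is_allocation n M B"
proof -
  have image: "\<sigma> ` {..<n} = {..<n}"
    using assms(1) by (simp add: bij_betw_def)
  have preimage: "\<exists>t<n. i = \<sigma> t" if "i < n" for i
    using image that by (metis imageE lessThan_iff)
  have "B i \<subseteq> M" if "i < n" for i
  proof -
    obtain t where "t < n" "i = \<sigma> t" using preimage \<open>i < n\<close> by blast
    then show ?thesis using assms(2) unfolding is_allocation_def by simp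
  qed
  moreover have "B i \<inter> B j = {}" if ij: "i < n" "j < n" "i \<noteq> j" for i j
  proof -
    obtain t u where "t < n" "u < n" "i = \<sigma> t" "j = \<sigma> u"
      using preimage[OF ij(1)] preimage[OF ij(2)] by metis
    moreover from this have "t \<noteq> u" using ij(3) by auto
    ultimately show ?thesis
      using assms(2) unfolding is_allocation_def by simp
  qed
  moreover have "(\<Union>i<n. B i) = M"
  proof -
    have "(\<Union>i<n. B i) = (\<Union>i\<in>\<sigma> ` {..<n}. B i)" using image by simp
    also have "\<dots> = M" using assms(2) unfolding is_allocation_def by (simp add: image_image)
    finally show ?thesis .
  qed
  ultimately show ?thesis
    unfolding is_allocation_def by blast
qed

lemma mms_attained:
  assumes "n \<ge> 1" "finite M" "nonneg_valuation M V"
  obtains B where "is_allocation n M B" "\<forall>j<n. mms n M V \<le> V (B j)" "mms n M V \<ge> 0"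
proof -
  let ?S = "{Min ((\<lambda>j. V (B j)) ` {..<n}) | B. is_allocation n M B}"
  have "?S \<subseteq> Min ` Pow (V ` Pow M)"
    unfolding is_allocation_def by blast
  moreover have "finite (Min ` Pow (V ` Pow M))"
    using assms(2) by simp
  ultimately have "finite ?S"
    by (rule finite_subset)
  moreover have "is_allocation n M (\<lambda>j. if j = 0 then M else {})"
    using assms(1) unfolding is_allocation_def by (auto split: if_splits)
  then have "?S \<noteq> {}" by blast
  ultimately have "mms n M V \<in> ?S"
    unfolding mms_def by (rule Max_in)
  then obtain B where alloc: "is_allocation n M B"
    and mms_eq: "mms n M V = Min ((\<lambda>j. V (B j)) ` {..<n})"
    by blast
  have "{..<n} \<noteq> {}" using assms(1) by (auto simp: lessThan_empty_iff)
  then have "mms n M V \<ge> 0"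
    using alloc assms(3) unfolding mms_eq is_allocation_def nonneg_valuation_def by simp
  then show thesis using that alloc mms_eq by simp
qed

section \<open>The guarantee for a single agent\<close>

definition maximal_subset :: "('a set \<Rightarrow> real) \<Rightarrow> nat \<Rightarrow> 'a set \<Rightarrow> 'a set \<Rightarrow> bool" where
  "maximal_subset f s R X \<longleftrightarrow>
     X \<subseteq> R \<and> card X = s \<and> (\<forall>T. T \<subseteq> R \<longrightarrow> card T = s \<longrightarrow> f T \<le> f X)"

lemma sum_remove_min_ge:
  fixes f :: "'a \<Rightarrow> real"
  assumes "finite X" "x \<in> X" "\<forall>y\<in>X. f x \<le> f y"
  shows "real (card X - 1) * sum f X \<le> real (card X) * sum f (X - {x})"
proof -
  have "card X > 0" using assms(1,2) by (auto simp: card_gt_0_iff)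
  have min_bound: "real (card X - 1) * f x \<le> sum f (X - {x})"
    using sum_bounded_below[of "X - {x}" "f x" f] assms by simp
  have "real (card X - 1) * sum f X = real (card X - 1) * f x + real (card X - 1) * sum f (X - {x})"
    using assms(1,2) by (simp add: sum.remove distrib_left)
  also have "\<dots> \<le> sum f (X - {x}) + real (card X - 1) * sum f (X - {x})"
    using min_bound by simp
  also have "\<dots> = real (card X) * sum f (X - {x})"
    using \<open>card X > 0\<close> by (simp add: of_nat_diff algebra_simps)
  finally show ?thesis .
qed

locale leveled_agent =
  fixes n :: nat and M :: "'g set" and V :: "'g set \<Rightarrow> real"
  assumes n_pos: "n \<ge> 1" and finite_M: "finite M" and additive_leveled: "additive_leveled M V"
begin

lemma nonneg: "S \<subseteq> M \<Longrightarrow> V S \<ge> 0"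
  and additive: "S \<subseteq> M \<Longrightarrow> V S = (\<Sum>g\<in>S. V {g})"
  and leveled: "S \<subseteq> M \<Longrightarrow> T \<subseteq> M \<Longrightarrow> card T < card S \<Longrightarrow> V T < V S"
  using additive_leveled
  unfolding additive_leveled_def nonneg_valuation_def additive_def leveled_def by auto

lemma nonneg_valuation: "nonneg_valuation M V"
  using additive_leveled unfolding additive_leveled_def by simp

lemma mms_allocation:
  obtains B where "is_allocation n M B" "\<forall>j<n. mms n M V \<le> V (B j)"
  using mms_attained[OF n_pos finite_M nonneg_valuation] by blast

lemma mms_nonneg: "mms n M V \<ge> 0"
  using mms_attained[OF n_pos finite_M nonneg_valuation] by blast

lemma mms_share_le_iff:
  "real k / real (k + 1) * mms n M V \<le> x \<longleftrightarrow> real k * mms n M V \<le> real (k + 1) * x"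
  by (simp add: field_simps)

lemma mms_less_of_card_Suc:
  assumes "X \<subseteq> M" "card X = card M div n + 1"
  shows "mms n M V < V X"
proof -
  obtain B where alloc: "is_allocation n M B" and mms_le: "\<forall>j<n. mms n M V \<le> V (B j)"
    by (rule mms_allocation)
  have "card M mod n < n" using n_pos by simp
  moreover have "card M = n * (card M div n) + card M mod n" by simp
  moreover have "n * (card M div n + 1) = n * (card M div n) + n" by simp
  ultimately have "card M < n * (card M div n + 1)" by linarith
  then obtain j where "j < n" "card (B j) < card M div n + 1"
    using allocation_ex_card_less[OF finite_M alloc] by blast
  moreover have "B j \<subseteq> M" using alloc \<open>j < n\<close> unfolding is_allocation_def by blast
  ultimately show ?thesis
    using leveled[OF assms(1)] assms(2) mms_le by (metis order.strict_trans1)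
qed

lemma mms_bound_of_card_Suc:
  assumes "W \<subseteq> M" "card W = card M div n + 1"
  shows "real (card M div n) / real (card M div n + 1) * mms n M V \<le> V W"
proof -
  have "real (card M div n) * mms n M V \<le> real (card M div n + 1) * mms n M V"
    using mms_nonneg by (simp add: mult_right_mono)
  also have "\<dots> \<le> real (card M div n + 1) * V W"
    using mms_less_of_card_Suc[OF assms] by simp
  finally show ?thesis unfolding mms_share_le_iff .
qed

lemma mms_bound_of_maximal_in_larger:
  assumes "maximal_subset V (card M div n) R W" "R \<subseteq> M" "card M div n + 1 \<le> card R"
  shows "real (card M div n) / real (card M div n + 1) * mms n M V \<le> V W"
proof -
  define k where "k = card M div n"
  obtain X where "X \<subseteq> R" "card X = k + 1"
    using obtain_subset_with_card_n assms(3) unfolding k_def by metis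
  then have XM: "X \<subseteq> M" and finX: "finite X" and "X \<noteq> {}"
    using assms(2) finite_M by (auto intro: finite_subset)
  then obtain x where x: "x \<in> X" "\<forall>y\<in>X. V {x} \<le> V {y}"
    using finite_ne_ex_min[OF finX, of "\<lambda>y. V {y}"] by blast
  have "real k * mms n M V \<le> real k * V X"
    using mms_less_of_card_Suc[OF XM] \<open>card X = k + 1\<close> unfolding k_def
    by (simp add: mult_left_mono)
  also have "\<dots> \<le> real (k + 1) * V (X - {x})"
    using sum_remove_min_ge[OF finX x] \<open>card X = k + 1\<close> additive[OF XM] additive[of "X - {x}"] XM
    by (auto simp: Diff_subset[THEN subset_trans])
  also have "\<dots> \<le> real (k + 1) * V W"
  proof -
    have "card (X - {x}) = k" using \<open>card X = k + 1\<close> finX x(1) by simp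
    moreover have "X - {x} \<subseteq> R" using \<open>X \<subseteq> R\<close> by blast
    ultimately have "V (X - {x}) \<le> V W"
      using assms(1) unfolding maximal_subset_def k_def[symmetric] by blast
    then show ?thesis by (simp add: mult_left_mono)
  qed
  finally show ?thesis unfolding k_def mms_share_le_iff .
qed

lemma mms_bound_of_exact_division:
  assumes "card M = n * (card M div n)" "W \<subseteq> M" "card W = card M div n"
  shows "real (card M div n) / real (card M div n + 1) * mms n M V \<le> V W"
proof -
  define k where "k = card M div n"
  obtain B where alloc: "is_allocation n M B" and mms_le: "\<forall>j<n. mms n M V \<le> V (B j)"
    by (rule mms_allocation)
  have BM: "B j \<subseteq> M" if "j < n" for j
    using alloc that unfolding is_allocation_def by blast
  have less_bundle_bound: ?thesis if "j < n" "card (B j) < k" for j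
  proof -
    have "mms n M V \<le> V W"
      using mms_le leveled[OF assms(2) BM] that assms(3) unfolding k_def by fastforce
    then have "real k * mms n M V \<le> real k * V W"
      by (simp add: mult_left_mono)
    then show ?thesis
      using nonneg[OF assms(2)] unfolding k_def mms_share_le_iff by (simp add: distrib_right)
  qed
  show ?thesis
  proof (cases "k = 0")
    case True
    then show ?thesis using nonneg[OF assms(2)] unfolding k_def by simp
  next
    case False
    then have "M \<noteq> {}" using assms(1) unfolding k_def by auto
    then obtain g where g: "g \<in> M" "\<forall>y\<in>M. V {g} \<le> V {y}"
      using finite_ne_ex_min[OF finite_M, of "\<lambda>y. V {y}"] by blast
    then obtain i where i: "i < n" "g \<in> B i"
      using alloc unfolding is_allocation_def by blast
    show ?thesis
    proof (cases "card (B i) \<le> k")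
      case True
      have finBi: "finite (B i)" using BM[OF i(1)] finite_M by (rule finite_subset)
      have "card (B i - {g}) < card W"
        using True i finBi False assms(3) unfolding k_def by simp
      then have rest: "V (B i - {g}) < V W"
        using leveled[OF assms(2)] BM[OF i(1)] by blast
      have "real k * V {g} \<le> V W"
        using sum_bounded_below[of W "V {g}" "\<lambda>y. V {y}"] g assms(2,3) additive[OF assms(2)]
        unfolding k_def by auto
      moreover have "V (B i) = V {g} + V (B i - {g})"
        using additive[OF BM[OF i(1)]] additive[of "B i - {g}"] BM[OF i(1)] i finBi
        by (simp add: sum.remove Diff_subset[THEN subset_trans])
      moreover have "real k * V (B i - {g}) \<le> real k * V W"
        using rest by (simp add: mult_left_mono)
      ultimately have "real k * V (B i) \<le> real (k + 1) * V W"
        by (simp add: algebra_simps)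
      moreover have "real k * mms n M V \<le> real k * V (B i)"
        using mms_le i(1) by (simp add: mult_left_mono)
      ultimately show ?thesis unfolding k_def mms_share_le_iff by linarith
    next
      case False
      then show ?thesis
        using allocation_ex_card_less_of_large[OF finite_M alloc _ i(1)] assms(1)
          less_bundle_bound unfolding k_def by (metis le_refl not_le)
    qed
  qed
qed

end

section \<open>The sequential procedure\<close>

text \<open>Steps are numbered from \<open>0\<close>: step \<open>t\<close> hands \<open>pick_size n m t\<close> goods to agent \<open>\<sigma> t\<close>.\<close>

definition pick_size :: "nat \<Rightarrow> nat \<Rightarrow> nat \<Rightarrow> nat" where
  "pick_size n m t = (if t < n - m mod n then m div n else m div n + 1)"

lemma sum_pick_size:
  "t \<le> n \<Longrightarrow> (\<Sum>u<t. pick_size n m u) = t * (m div n) + (t - (n - m mod n))"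
  by (induction t) (auto simp: pick_size_def)

lemma sum_pick_size_all: "n \<ge> 1 \<Longrightarrow> (\<Sum>u<n. pick_size n m u) = m"
  using sum_pick_size[of n n m] by simp

lemma remaining_after_small_picks:
  fixes n m t :: nat
  assumes "t < n - m mod n"
  shows "m div n + 1 \<le> m - t * (m div n) \<or> (m - t * (m div n) = m div n \<and> m = n * (m div n))"
proof -
  define k r where "k = m div n" and "r = m mod n"
  have "t + r + 1 \<le> n"
    using assms unfolding r_def by linarith
  then obtain d where n: "n = t + r + 1 + d"
    using le_Suc_ex by blast
  have m: "m = n * k + r" unfolding k_def r_def by simp
  have rest: "m - t * k = k + ((r + d) * k + r)"
    unfolding m n by (simp add: algebra_simps)
  show ?thesis
  proof (cases "(r + d) * k + r = 0")
    case True
    then have "m = n * k" using m n by (simp add: algebra_simps)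
    then show ?thesis using rest True unfolding k_def by simp
  next
    case False
    then have "1 \<le> (r + d) * k + r" by linarith
    then show ?thesis using rest unfolding k_def by linarith
  qed
qed

lemma procedure_outcome_iff:
  "procedure_outcome n M V \<sigma> B \<longleftrightarrow>
     (\<forall>t<n. maximal_subset (V (\<sigma> t)) (pick_size n (card M) t) (M - (\<Union>u<t. B (\<sigma> u))) (B (\<sigma> t)))"
  unfolding procedure_outcome_def maximal_subset_def pick_size_def Let_def by simp

lemma sequential_picks_card:
  fixes C :: "nat \<Rightarrow> 'a set"
  assumes "finite M" "\<forall>t<n. C t \<subseteq> M - (\<Union>u<t. C u) \<and> card (C t) = s t"
  shows "t \<le> n \<Longrightarrow> (\<Union>u<t. C u) \<subseteq> M \<and> card (\<Union>u<t. C u) = (\<Sum>u<t. s u)"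
proof (induction t)
  case (Suc t)
  then have IH: "(\<Union>u<t. C u) \<subseteq> M" "card (\<Union>u<t. C u) = (\<Sum>u<t. s u)" and "t < n" by auto
  then have pick: "C t \<subseteq> M - (\<Union>u<t. C u)" "card (C t) = s t" using assms(2) by auto
  have "finite (\<Union>u<t. C u)" "finite (C t)"
    using IH(1) pick(1) assms(1) by (auto intro: finite_subset)
  moreover have "(\<Union>u<t. C u) \<inter> C t = {}" using pick(1) by blast
  ultimately have "card ((\<Union>u<t. C u) \<union> C t) = (\<Sum>u<t. s u) + s t"
    using IH(2) pick(2) by (simp add: card_Un_disjoint)
  moreover have "(\<Union>u<Suc t. C u) = (\<Union>u<t. C u) \<union> C t" by (auto simp: lessThan_Suc)
  ultimately show ?case using IH(1) pick(1) by auto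
qed simp

lemma sequential_picks_allocation:
  fixes C :: "nat \<Rightarrow> 'a set"
  assumes "finite M" "\<forall>t<n. C t \<subseteq> M - (\<Union>u<t. C u) \<and> card (C t) = s t"
    and "(\<Sum>u<n. s u) = card M"
  shows "is_allocation n M C"
proof -
  have "(\<Union>u<n. C u) = M"
    using sequential_picks_card[OF assms(1,2) order.refl] assms(1,3) card_subset_eq by metis
  moreover have "C u \<inter> C t = {}" if "u < t" "t < n" for u t
    using assms(2) that by blast
  then have "C i \<inter> C j = {}" if "i < n" "j < n" "i \<noteq> j" for i j
    using that by (metis Int_commute linorder_neqE_nat)
  ultimately show ?thesis unfolding is_allocation_def by blast
qed

lemma (in leveled_agent) mms_bound_of_pick:
  assumes "t < n" "maximal_subset V (pick_size n (card M) t) (M - P) W"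
    and "P \<subseteq> M" "card P = (\<Sum>u<t. pick_size n (card M) u)"
  shows "real (card M div n) / real (card M div n + 1) * mms n M V \<le> V W"
proof (cases "t < n - card M mod n")
  case True
  have size: "pick_size n (card M) t = card M div n"
    using True unfolding pick_size_def by simp
  have "finite P" using assms(3) finite_M by (rule finite_subset)
  then have "card (M - P) = card M - t * (card M div n)"
    using card_Diff_subset[OF _ assms(3)] assms(1,4) True sum_pick_size[of t n "card M"] by simp
  then consider "card M div n + 1 \<le> card (M - P)"
    | "card (M - P) = card M div n" "card M = n * (card M div n)"
    using remaining_after_small_picks[OF True] by auto
  then show ?thesis
  proof cases
    case 1
    then show ?thesis
      using mms_bound_of_maximal_in_larger assms(2) size by auto
  next
    case 2
    then show ?thesis
      using mms_bound_of_exact_division assms(2) size unfolding maximal_subset_def by auto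
  qed
next
  case False
  then show ?thesis
    using mms_bound_of_card_Suc assms(2) unfolding maximal_subset_def pick_size_def by auto
qed

lemma procedure_outcome_alpha_MMS:
  assumes "n \<ge> 1" "finite M" "\<forall>i<n. additive_leveled M (V i)" "bij_betw \<sigma> {..<n} {..<n}"
    and "procedure_outcome n M V \<sigma> B"
  shows "alpha_MMS (real (card M div n) / real (card M div n + 1)) n M V B"
proof -
  define C where "C t = B (\<sigma> t)" for t
  have picks: "\<forall>t<n. maximal_subset (V (\<sigma> t)) (pick_size n (card M) t) (M - (\<Union>u<t. C u)) (C t)"
    using assms(5) unfolding procedure_outcome_iff C_def .
  then have picks': "\<forall>t<n. C t \<subseteq> M - (\<Union>u<t. C u) \<and> card (C t) = pick_size n (card M) t"
    unfolding maximal_subset_def by blast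
  have "is_allocation n M B"
    using sequential_picks_allocation[OF assms(2) picks' sum_pick_size_all[OF assms(1)]]
      is_allocation_reindex[OF assms(4)] unfolding C_def by blast
  moreover have "real (card M div n) / real (card M div n + 1) * mms n M (V i) \<le> V i (B i)"
    if "i < n" for i
  proof -
    obtain t where t: "t < n" "i = \<sigma> t"
      using assms(4) \<open>i < n\<close> unfolding bij_betw_def by (metis imageE lessThan_iff)
    interpret leveled_agent n M "V i"
      using assms(1-3) \<open>i < n\<close> by unfold_locales auto
    show ?thesis
      using mms_bound_of_pick[OF t(1)] picks sequential_picks_card[OF assms(2) picks' less_imp_le[OF t(1)]]
        t unfolding C_def by auto
  qed
  ultimately show ?thesis unfolding alpha_MMS_def by blast
qed

section \<open>Existence of an outcome\<close>

lemma maximal_subset_exists: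
  assumes "finite R" "s \<le> card R"
  shows "\<exists>X. maximal_subset f s R X"
proof -
  let ?F = "{X. X \<subseteq> R \<and> card X = s}"
  have "finite ?F" using assms(1) by simp
  moreover have "?F \<noteq> {}" using obtain_subset_with_card_n[OF assms(2)] by blast
  ultimately obtain X where "X \<in> ?F" "\<forall>Y\<in>?F. - f X \<le> - f Y"
    using finite_ne_ex_min[of ?F "\<lambda>X. - f X"] by blast
  then show ?thesis unfolding maximal_subset_def by auto
qed

primrec taken :: "(nat \<Rightarrow> 'a set \<Rightarrow> 'a set) \<Rightarrow> 'a set \<Rightarrow> nat \<Rightarrow> 'a set" where
  "taken pick M 0 = {}"
| "taken pick M (Suc t) = taken pick M t \<union> pick t (M - taken pick M t)"

lemma taken_eq_UN: "taken pick M t = (\<Union>u<t. pick u (M - taken pick M u))"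
  by (induction t) (auto simp: lessThan_Suc)

lemma procedure_outcome_exists:
  assumes "n \<ge> 1" "finite M" "bij_betw \<sigma> {..<n} {..<n}"
  shows "\<exists>B. procedure_outcome n M V \<sigma> B"
proof -
  let ?s = "pick_size n (card M)"
  define pick where "pick t R = (SOME X. maximal_subset (V (\<sigma> t)) (?s t) R X)" for t R
  define C where "C t = pick t (M - taken pick M t)" for t
  have taken_C: "taken pick M t = (\<Union>u<t. C u)" for t
    unfolding C_def by (rule taken_eq_UN)
  have "\<forall>u<t. maximal_subset (V (\<sigma> u)) (?s u) (M - (\<Union>v<u. C v)) (C u)" if "t \<le> n" for t
    using that
  proof (induction t)
    case (Suc t)
    then have IH: "\<forall>u<t. maximal_subset (V (\<sigma> u)) (?s u) (M - (\<Union>v<u. C v)) (C u)" by simp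
    have taken_t: "(\<Union>u<t. C u) \<subseteq> M" "card (\<Union>u<t. C u) = (\<Sum>u<t. ?s u)"
      using sequential_picks_card[where n=t and C=C and s="?s" and t=t, OF assms(2)] IH
      unfolding maximal_subset_def by auto
    have "(\<Sum>u<Suc t. ?s u) \<le> (\<Sum>u<n. ?s u)"
      using Suc.prems by (intro sum_mono2) auto
    moreover have "finite (\<Union>u<t. C u)"
      using taken_t(1) assms(2) by (rule finite_subset)
    ultimately have "?s t \<le> card (M - (\<Union>u<t. C u))"
      using taken_t card_Diff_subset[OF _ taken_t(1)] sum_pick_size_all[OF assms(1)] by simp
    then have "\<exists>X. maximal_subset (V (\<sigma> t)) (?s t) (M - (\<Union>u<t. C u)) X"
      using assms(2) by (intro maximal_subset_exists) auto
    then have "maximal_subset (V (\<sigma> t)) (?s t) (M - (\<Union>u<t. C u)) (pick t (M - (\<Union>u<t. C u)))"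
      unfolding pick_def by (rule someI_ex)
    moreover have "C t = pick t (M - (\<Union>u<t. C u))"
      unfolding C_def[of t] taken_C[of t] ..
    ultimately have "maximal_subset (V (\<sigma> t)) (?s t) (M - (\<Union>u<t. C u)) (C t)"
      by simp
    with IH show ?case by (simp add: less_Suc_eq)
  qed simp
  then have picks: "\<forall>t<n. maximal_subset (V (\<sigma> t)) (?s t) (M - (\<Union>u<t. C u)) (C t)" by blast
  define B where "B i = C (inv_into {..<n} \<sigma> i)" for i
  have "B (\<sigma> t) = C t" if "t < n" for t
    using assms(3) that unfolding B_def bij_betw_def by simp
  then have "procedure_outcome n M V \<sigma> B"
    using picks unfolding procedure_outcome_iff by simp
  then show ?thesis by blast
qed

theorem mainTheorem1:
  fixes n :: nat and M :: "'g set" and V :: "nat \<Rightarrow> 'g set \<Rightarrow> real"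
    and \<sigma> :: "nat \<Rightarrow> nat"
  assumes "n \<ge> 1"
    and "finite M"
    and "\<forall>i<n. additive_leveled M (V i)"
    and "bij_betw \<sigma> {..<n} {..<n}"
  shows "(\<forall>B. procedure_outcome n M V \<sigma> B \<longrightarrow>
            alpha_MMS (real (card M div n) / real (card M div n + 1)) n M V B)
         \<and> (\<exists>B. alpha_MMS (real (card M div n) / real (card M div n + 1)) n M V B)"
  using procedure_outcome_alpha_MMS[OF assms] procedure_outcome_exists[OF assms(1,2,4), of V]
  by blast

end
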